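(* Let $R\in\mathbb{R}^{n\times m}$ be a matrix such that $\mathcal{K}_{\mathcal{R}}(R)=\{Rp: p\in\mathbb{R}^m,\ p\ge 0\}$ is a proper cone. Let $\mathcal{X}\subseteq\mathbb{R}^n$ and let $f:\mathcal{X}\to\mathbb{R}^n$ be differentiable with Jacobian $\partial f(x)$. Suppose that for every $x\in\mathcal{X}$ there exist $\alpha\in\mathbb{R}$ and a matrix $P\in\mathbb{R}^{m\times m}$ with all entries strictly positive such that $$(\alpha I+\partial f(x))R=RP.$$ Then the system $\dot x=f(x)$ is strictly K-cooperative with respect to $\mathcal{K}_{\mathcal{R}}(R)$.
   Context: Inequalities between vectors/matrices are entrywise; $P>0$ means every entry of $P$ is strictly positive. A proper cone is a set $\mathcal{K}\subseteq\mathbb{R}^n$ such that: (i) if $r_1,r_2\in\mathcal{K}$ and $p_1,p_2\ge 0$ are real, then $p_1r_1+p_2r_2\in\mathcal{K}$; (ii) $\mathcal{K}$ has nonempty interior; (iii) if $r\in\mathcal{K}\setminus\{0\}$ then $-r\notin\mathcal{K}$. The dual cone is $\mathcal{K}^*=\{h:\langle h,r\rangle\ge 0\ \forall r\in\mathcal{K}\}$. Strict K-cooperativity: for a proper cone $\mathcal{K}$ and differentiable $f:\mathcal{X}\to\mathbb{R}^n$, the system $\dot x=f(x)$ is strictly K-cooperative with respect to $\mathcal{K}$ if for all $x\in\mathcal{X}$, all $\delta x\in\mathcal{K}\setminus\{0\}$ and all $h\in\mathcal{K}^*\setminus\{0\}$, $\langle h,\delta x\rangle=0$ implies $\langle h,\partial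 f(x)\,\delta x\rangle>0$. *)

theory Defs
  imports "HOL-Analysis.Analysis"
begin

definition proper_cone :: "('a::euclidean_space) set \<Rightarrow> bool" where
  "proper_cone K \<longleftrightarrow>
     (\<forall>r1\<in>K. \<forall>r2\<in>K. \<forall>p1 p2::real. p1 \<ge> 0 \<longrightarrow> p2 \<ge> 0 \<longrightarrow> p1 *\<^sub>R r1 + p2 *\<^sub>R r2 \<in> K) \<and>
     interior K \<noteq> {} \<and>
     (\<forall>r\<in>K - {0}. - r \<notin> K)"

definition dual_cone :: "('a::euclidean_space) set \<Rightarrow> 'a set" where
  "dual_cone K = {h. \<forall>r\<in>K. inner h r \<ge> 0}"

definition col_cone :: "real^'m^'n \<Rightarrow> (real^'n) set" where
  "col_cone R = {R *v p | p. \<forall>i. p $ i \<ge> 0}"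

definition strictly_K_cooperative ::
  "(real^'n) set \<Rightarrow> (real^'n) set \<Rightarrow> (real^'n \<Rightarrow> real^'n^'n) \<Rightarrow> bool" where
  "strictly_K_cooperative K X J \<longleftrightarrow>
     (\<forall>x\<in>X. \<forall>dx\<in>K - {0}. \<forall>h\<in>dual_cone K - {0}.
        inner h dx = 0 \<longrightarrow> inner h (J x *v dx) > 0)"

end

theory Submission
  imports Defs
begin

text \<open>Write \<open>\<delta>x = R p\<close> with \<open>p \<ge> 0\<close>, \<open>p \<noteq> 0\<close>, and set \<open>q = R\<^sup>T h\<close>, so that \<open>\<langle>h, R v\<rangle> = \<langle>q, v\<rangle>\<close>.
  Since \<open>h\<close> lies in the dual cone, \<open>q \<ge> 0\<close>; since the cone has interior and \<open>h \<noteq> 0\<close>, also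
  \<open>q \<noteq> 0\<close>. The hypothesis gives \<open>\<partial>f(x) R p = R P p - \<alpha> R p\<close>, and \<open>\<langle>h, R p\<rangle> = 0\<close> leaves
  \<open>\<langle>h, \<partial>f(x) \<delta>x\<rangle> = \<langle>q, P p\<rangle>\<close>, which is positive because \<open>P p > 0\<close>.\<close>

lemma nonneg_nonzero_vec_obtain_pos:
  fixes p :: "real^'n"
  assumes "\<forall>i. p $ i \<ge> 0" and "p \<noteq> 0"
  obtains k where "p $ k > 0"
  using assms by (metis less_eq_real_def vec_eq_iff zero_index)

lemma inner_pos_of_nonneg_nonzero:
  fixes q v :: "real^'n"
  assumes q: "\<forall>i. q $ i \<ge> 0" "q \<noteq> 0" and v: "\<forall>i. v $ i > 0"
  shows "inner q v > 0"
proof -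
  obtain k where "q $ k > 0" using nonneg_nonzero_vec_obtain_pos q .
  then have "0 < (\<Sum>i\<in>UNIV. q $ i * v $ i)"
    using q v by (intro sum_pos2[of UNIV k]) (auto intro: mult_nonneg_nonneg less_imp_le)
  then show ?thesis by (simp add: inner_vec_def)
qed

lemma matrix_vector_mult_pos:
  fixes P :: "real^'m^'n" and p :: "real^'m"
  assumes "\<forall>i j. P $ i $ j > 0" and "\<forall>j. p $ j \<ge> 0" and "p \<noteq> 0"
  shows "(P *v p) $ i > 0"
  using inner_pos_of_nonneg_nonzero[of p "P $ i"] assms
  by (simp add: matrix_vector_mult_def inner_vec_def mult.commute)

lemma orthogonal_to_set_with_interior:
  fixes h :: "'a::real_inner"
  assumes "interior K \<noteq> {}" and orth: "\<forall>y\<in>K. inner h y = 0"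
  shows "h = 0"
proof (rule ccontr)
  assume "h \<noteq> 0"
  then have hn: "norm h > 0" by simp
  obtain z e where z: "z \<in> K" and e: "e > 0" "ball z e \<subseteq> K"
    using assms(1) by (metis all_not_in_conv interior_subset mem_interior subsetD)
  define w where "w = z + (e / 2 / norm h) *\<^sub>R h"
  have "w \<in> K" using e hn by (intro subsetD[OF e(2)]) (simp add: w_def dist_norm)
  then have "inner h w - inner h z = 0" using z orth by simp
  then have "(e / 2 / norm h) * inner h h = 0" by (simp add: w_def inner_add_right)
  with e hn show False by simp
qed

lemma col_cone_iff: "v \<in> col_cone R \<longleftrightarrow> (\<exists>p. v = R *v p \<and> (\<forall>i. p $ i \<ge> 0))"
  unfolding col_cone_def by blast

lemma dual_col_cone_transpose_nonneg:
  assumes "h \<in> dual_cone (col_cone R)"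
  shows "(h v* R) $ j \<ge> 0"
proof -
  have "R *v axis j 1 \<in> col_cone R" by (auto simp: col_cone_iff axis_def)
  with assms have "inner (h v* R) (axis j 1) \<ge> 0"
    by (simp add: dual_cone_def dot_lmul_matrix)
  then show ?thesis by (simp add: inner_axis)
qed

lemma dual_col_cone_transpose_nonzero:
  assumes "interior (col_cone R) \<noteq> {}" and "h \<in> dual_cone (col_cone R)" and "h \<noteq> 0"
  shows "h v* R \<noteq> 0"
proof
  assume "h v* R = 0"
  then have "\<forall>y\<in>col_cone R. inner h y = 0"
    by (auto simp: col_cone_iff simp flip: dot_lmul_matrix)
  with assms show False using orthogonal_to_set_with_interior by blast
qed

lemma shifted_similarity_action:
  fixes J :: "real^'n^'n" and R :: "real^'m^'n"
  assumes "(\<alpha> *\<^sub>R mat 1 + J) ** R = R ** P"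
  shows "J *v (R *v p) = R *v (P *v p) - \<alpha> *\<^sub>R (R *v p)"
proof -
  have "\<alpha> *\<^sub>R (R *v p) + J *v (R *v p) = (\<alpha> *\<^sub>R mat 1 + J) *v (R *v p)"
    by (simp add: matrix_vector_mult_add_rdistrib flip: scaleR_matrix_vector_assoc)
  also have "\<dots> = R *v (P *v p)"
    using assms by (simp add: matrix_vector_mul_assoc)
  finally show ?thesis by (simp add: algebra_simps)
qed

theorem proposition3:
  fixes R :: "real^'m^'n"
    and X :: "(real^'n) set"
    and f :: "real^'n \<Rightarrow> real^'n"
    and J :: "real^'n \<Rightarrow> real^'n^'n"
  assumes proper: "proper_cone (col_cone R)"
    and deriv: "\<And>x. x \<in> X \<Longrightarrow> (f has_derivative (\<lambda>h. J x *v h)) (at x within X)"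
    and hyp: "\<And>x. x \<in> X \<Longrightarrow> \<exists>(\<alpha>::real) (P::real^'m^'m).
                 (\<forall>i j. P $ i $ j > 0) \<and> (\<alpha> *\<^sub>R mat 1 + J x) ** R = R ** P"
  shows "strictly_K_cooperative (col_cone R) X J"
  unfolding strictly_K_cooperative_def
proof (intro ballI impI)
  fix x dx h
  assume x: "x \<in> X" and dx: "dx \<in> col_cone R - {0}"
    and h: "h \<in> dual_cone (col_cone R) - {0}" and orth: "inner h dx = 0"
  obtain p where dxp: "dx = R *v p" and p: "\<forall>i. p $ i \<ge> 0"
    using dx by (auto simp: col_cone_iff)
  obtain \<alpha> P where P: "\<forall>i j. (P::real^'m^'m) $ i $ j > 0"
    and eq: "(\<alpha> *\<^sub>R mat 1 + J x) ** R = R ** P"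
    using hyp[OF x] by blast
  have "inner h (J x *v dx) = inner (h v* R) (P *v p)"
    using orth by (simp add: dxp shifted_similarity_action[OF eq] inner_diff_right
        flip: dot_lmul_matrix)
  also have "\<dots> > 0"
  proof (rule inner_pos_of_nonneg_nonzero)
    show "\<forall>i. (h v* R) $ i \<ge> 0" using h dual_col_cone_transpose_nonneg by blast
    show "h v* R \<noteq> 0"
      using proper h by (intro dual_col_cone_transpose_nonzero) (auto simp: proper_cone_def)
    show "\<forall>i. (P *v p) $ i > 0" using dx dxp by (intro allI matrix_vector_mult_pos[OF P p]) auto
  qed
  finally show "inner h (J x *v dx) > 0" .
qed

end
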